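(* Let $H$ be a distribution function on $\mathbb{R}$ with finite variance, and for $N\ge1$ let $H^{\ast N}=H\ast\cdots\ast H$ ($N$ factors). For $n\ge 1$ let $t_n^{\ast N}$ be the Pitman estimator of $\theta$ from a sample of size $n$ from $H^{\ast N}(x-\theta)$. Then for any $N>1$ and any $n\ge 1$, $$\frac{\mathrm{var}(t_n^{\ast N})}{N}\ \ge\ \frac{\mathrm{var}(t_n^{\ast (N-1)})}{N-1}.$$
   Context: A sample of size $n$ from the population $G(x-\theta)$ ($\theta\in\mathbb{R}$ unknown) is $x_1,\ldots,x_n$ i.i.d. with $x_i-\theta\sim G$. An estimator $t$ is equivariant if $t(x_1+c,\ldots,x_n+c)=t(x_1,\ldots,x_n)+c$ for all $c$. The Pitman estimator is the equivariant estimator of minimal variance; when $G$ has finite second moment it equals $\bar x-E_0(\bar x\mid x_1-\bar x,\ldots,x_n-\bar x)$, with $E_0$ expectation under $\theta=0$. Convolution: $(F_1\ast F_2)(x)=\int F_1(x-y)\,dF_2(y)$. *)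

theory Defs
  imports "HOL-Probability.Probability"
begin

fun conv_pow :: "real measure \<Rightarrow> nat \<Rightarrow> real measure" where
  "conv_pow H 0 = return borel 0"
| "conv_pow H (Suc 0) = H"
| "conv_pow H (Suc (Suc k)) = convolution (conv_pow H (Suc k)) H"

text \<open>Sample space of an i.i.d. sample of size n from F at theta = 0.\<close>
definition sample :: "nat \<Rightarrow> real measure \<Rightarrow> (nat \<Rightarrow> real) measure" where
  "sample n F = PiM {..<n} (\<lambda>_. F)"

definition equivariant :: "nat \<Rightarrow> ((nat \<Rightarrow> real) \<Rightarrow> real) \<Rightarrow> bool" where
  "equivariant n t \<longleftrightarrow>
     (\<forall>x \<in> space (PiM {..<n} (\<lambda>_. (borel :: real measure))). \<forall>c::real.
        t (restrict (\<lambda>i. x i + c) {..<n}) = t x + c)"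

text \<open>Variance of the Pitman estimator: the minimal variance among equivariant
  (measurable, square integrable) estimators. Equivariant estimators have
  theta-independent variance, so it is computed at theta = 0.\<close>
definition pitman_var :: "nat \<Rightarrow> real measure \<Rightarrow> real" where
  "pitman_var n F = Inf {prob_space.variance (sample n F) t | t.
      t \<in> borel_measurable (sample n F) \<and> equivariant n t \<and>
      integrable (sample n F) (\<lambda>x. (t x)\<^sup>2)}"

end

theory Submission
  imports Defs
begin

text \<open>A sample from the \<open>N\<close>-fold convolution \<open>H\<^sup>N\<close> is the sum of a sample from \<open>H\<^sup>N\<^sup>-\<^sup>1\<close>
  and an independent sample from \<open>H\<close>, so averaging an equivariant estimator \<open>t\<close> over the second
  summand yields an equivariant estimator for \<open>H\<^sup>N\<^sup>-\<^sup>1\<close>. More generally let \<open>F j\<close> be the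
  average of \<open>t\<close> over the last \<open>j\<close> of the \<open>N\<close> independent summands, and \<open>s m\<close> the second moment
  of \<open>F (N - m)\<close>. All \<open>F j\<close> have the mean \<open>\<mu>\<close> of \<open>t\<close>, and \<open>s 0 = \<mu>\<^sup>2\<close>. Pythagoras for
  conditional expectations together with the exchangeability of two averaged summands makes \<open>s\<close>
  midpoint convex, hence \<open>N (s (N - 1) - \<mu>\<^sup>2) \<le> (N - 1) (s N - \<mu>\<^sup>2)\<close>, that is
  \<open>N var (F 1) \<le> (N - 1) var t\<close>. Taking the infimum over \<open>t\<close> gives the theorem.\<close>

lemma integrable_power2_iff_nn_integral:
  fixes u :: "'a \<Rightarrow> real"
  assumes "u \<in> borel_measurable M"
  shows "integrable M (\<lambda>x. (u x)\<^sup>2) \<longleftrightarrow> (\<integral>\<^sup>+x. ennreal ((u x)\<^sup>2) \<partial>M) < \<infinity>"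
  using assms by (simp add: integrable_iff_bounded)

lemma (in prob_space) nn_integral_power2_mean_decomp:
  fixes u :: "'a \<Rightarrow> real"
  assumes [measurable]: "u \<in> borel_measurable M" and u2: "integrable M (\<lambda>x. (u x)\<^sup>2)"
  shows "(\<integral>\<^sup>+x. ennreal ((u x)\<^sup>2) \<partial>M) =
     ennreal ((\<integral>x. u x \<partial>M)\<^sup>2) + (\<integral>\<^sup>+x. ennreal ((u x - (\<integral>x. u x \<partial>M))\<^sup>2) \<partial>M)"
proof -
  define c where "c = (\<integral>x. u x \<partial>M)"
  have u: "integrable M u" by (rule square_integrable_imp_integrable) (use u2 in auto)
  have uc2: "integrable M (\<lambda>x. (u x - c)\<^sup>2)"
    unfolding power2_diff using u2 u
    by (intro Bochner_Integration.integrable_diff Bochner_Integration.integrable_add) auto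
  have var: "(\<integral>x. (u x - c)\<^sup>2 \<partial>M) = (\<integral>x. (u x)\<^sup>2 \<partial>M) - c\<^sup>2"
    unfolding power2_diff using u2 u prob_space by (simp add: c_def power2_eq_square)
  have "(\<integral>\<^sup>+x. ennreal ((u x)\<^sup>2) \<partial>M) = ennreal (\<integral>x. (u x)\<^sup>2 \<partial>M)"
    by (rule nn_integral_eq_integral[OF u2]) auto
  moreover have "(\<integral>\<^sup>+x. ennreal ((u x - c)\<^sup>2) \<partial>M) = ennreal (\<integral>x. (u x - c)\<^sup>2 \<partial>M)"
    by (rule nn_integral_eq_integral[OF uc2]) auto
  moreover have "(\<integral>x. (u x - c)\<^sup>2 \<partial>M) \<ge> 0" by simp
  ultimately show ?thesis unfolding c_def[symmetric] using var
    by (simp add: ennreal_plus[symmetric] del: ennreal_plus)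
qed

lemma (in pair_prob_space) nn_integral_power2_pair_decomp:
  fixes \<phi> :: "'a \<times> 'b \<Rightarrow> real" and \<psi> :: "'a \<Rightarrow> real"
  assumes [measurable]: "\<phi> \<in> borel_measurable (M1 \<Otimes>\<^sub>M M2)" "\<psi> \<in> borel_measurable M1"
    and \<phi>2: "integrable (M1 \<Otimes>\<^sub>M M2) (\<lambda>x. (\<phi> x)\<^sup>2)"
    and \<psi>: "AE a in M1. \<psi> a = (\<integral>b. \<phi> (a, b) \<partial>M2)"
  shows "(\<integral>\<^sup>+x. ennreal ((\<phi> x)\<^sup>2) \<partial>(M1 \<Otimes>\<^sub>M M2)) =
    (\<integral>\<^sup>+a. ennreal ((\<psi> a)\<^sup>2) \<partial>M1) + (\<integral>\<^sup>+x. ennreal ((\<phi> x - \<psi> (fst x))\<^sup>2) \<partial>(M1 \<Otimes>\<^sub>M M2))"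
proof -
  have fibres: "AE a in M1. integrable M2 (\<lambda>b. (\<phi> (a, b))\<^sup>2)"
    using AE_integrable_fst'[OF \<phi>2] by simp
  have "(\<integral>\<^sup>+x. ennreal ((\<phi> x)\<^sup>2) \<partial>(M1 \<Otimes>\<^sub>M M2)) = (\<integral>\<^sup>+a. \<integral>\<^sup>+b. ennreal ((\<phi> (a, b))\<^sup>2) \<partial>M2 \<partial>M1)"
    by (rule M2.nn_integral_fst[symmetric]) simp
  also have "\<dots> = (\<integral>\<^sup>+a. ennreal ((\<psi> a)\<^sup>2) + (\<integral>\<^sup>+b. ennreal ((\<phi> (a, b) - \<psi> a)\<^sup>2) \<partial>M2) \<partial>M1)"
  proof (rule nn_integral_cong_AE)
    show "AE a in M1. (\<integral>\<^sup>+b. ennreal ((\<phi> (a, b))\<^sup>2) \<partial>M2) =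
        ennreal ((\<psi> a)\<^sup>2) + (\<integral>\<^sup>+b. ennreal ((\<phi> (a, b) - \<psi> a)\<^sup>2) \<partial>M2)"
      using fibres \<psi> AE_space
    proof eventually_elim
      case (elim a)
      then show ?case using M2.nn_integral_power2_mean_decomp[OF _ elim(1)] elim(2) by simp
    qed
  qed
  also have "\<dots> = (\<integral>\<^sup>+a. ennreal ((\<psi> a)\<^sup>2) \<partial>M1) + (\<integral>\<^sup>+a. \<integral>\<^sup>+b. ennreal ((\<phi> (a, b) - \<psi> a)\<^sup>2) \<partial>M2 \<partial>M1)"
    by (rule nn_integral_add) auto
  also have "(\<integral>\<^sup>+a. \<integral>\<^sup>+b. ennreal ((\<phi> (a, b) - \<psi> a)\<^sup>2) \<partial>M2 \<partial>M1) =
      (\<integral>\<^sup>+x. ennreal ((\<phi> x - \<psi> (fst x))\<^sup>2) \<partial>(M1 \<Otimes>\<^sub>M M2))"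
    by (subst M2.nn_integral_fst[symmetric]) auto
  finally show ?thesis .
qed

lemma pair_prob_spaceI: "prob_space M \<Longrightarrow> prob_space N \<Longrightarrow> pair_prob_space M N"
  by (simp add: pair_prob_space_def pair_sigma_finite_def prob_space_imp_sigma_finite)

lemma nn_integral_pair_measure_swap_snd:
  fixes g :: "('a \<times> 'b) \<times> 'b \<Rightarrow> ennreal"
  assumes "prob_space M" "prob_space Q"
    and [measurable]: "g \<in> borel_measurable ((M \<Otimes>\<^sub>M Q) \<Otimes>\<^sub>M Q)"
  shows "(\<integral>\<^sup>+x. g ((fst (fst x), snd x), snd (fst x)) \<partial>((M \<Otimes>\<^sub>M Q) \<Otimes>\<^sub>M Q)) =
    (\<integral>\<^sup>+x. g x \<partial>((M \<Otimes>\<^sub>M Q) \<Otimes>\<^sub>M Q))"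
proof -
  interpret MQ: pair_prob_space M Q using assms(1,2) by (rule pair_prob_spaceI)
  interpret QQ: pair_prob_space Q Q using assms(2) by (intro pair_prob_spaceI)
  have "(\<integral>\<^sup>+x. g ((fst (fst x), snd x), snd (fst x)) \<partial>((M \<Otimes>\<^sub>M Q) \<Otimes>\<^sub>M Q)) =
      (\<integral>\<^sup>+z. \<integral>\<^sup>+y. \<integral>\<^sup>+y'. g ((z, y'), y) \<partial>Q \<partial>Q \<partial>M)"
    by (simp add: MQ.M2.nn_integral_fst[symmetric])
  also have "\<dots> = (\<integral>\<^sup>+z. \<integral>\<^sup>+y'. \<integral>\<^sup>+y. g ((z, y'), y) \<partial>Q \<partial>Q \<partial>M)"
    by (intro nn_integral_cong QQ.Fubini'[symmetric]) auto
  also have "\<dots> = (\<integral>\<^sup>+x. g x \<partial>((M \<Otimes>\<^sub>M Q) \<Otimes>\<^sub>M Q))"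
    by (simp add: MQ.M2.nn_integral_fst[symmetric])
  finally show ?thesis .
qed

lemma AE_pair_measure_fstI:
  assumes "prob_space Q" and ae: "AE z in M. P z"
  shows "AE x in M \<Otimes>\<^sub>M Q. P (fst x)"
proof -
  interpret Q: prob_space Q by fact
  from ae obtain N where N: "{z\<in>space M. \<not> P z} \<subseteq> N" "N \<in> sets M" "emeasure M N = 0"
    by (auto elim: AE_E)
  have "emeasure (M \<Otimes>\<^sub>M Q) (N \<times> space Q) = emeasure M N * emeasure Q (space Q)"
    using N by (intro Q.emeasure_pair_measure_Times) auto
  then have "N \<times> space Q \<in> null_sets (M \<Otimes>\<^sub>M Q)" using N by (auto simp: null_sets_def)
  moreover have "{x\<in>space (M \<Otimes>\<^sub>M Q). \<not> P (fst x)} \<subseteq> N \<times> space Q"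
    using N(1) by (auto simp: space_pair_measure)
  ultimately show ?thesis by (rule AE_I')
qed

text \<open>With \<open>f\<close> and \<open>g\<close> the successive averages of \<open>G\<close> over its last and its middle
  coordinate, \<open>\<parallel>f\<parallel>\<^sup>2 = \<parallel>g\<parallel>\<^sup>2 + \<parallel>f - g\<parallel>\<^sup>2\<close> and \<open>\<parallel>G\<parallel>\<^sup>2 = \<parallel>f\<parallel>\<^sup>2 + \<parallel>G - f\<parallel>\<^sup>2\<close>. Swapping the two
  symmetric coordinates turns \<open>G - f\<close> into a function whose average over the last coordinate
  is \<open>f - g\<close>, so \<open>\<parallel>f - g\<parallel> \<le> \<parallel>G - f\<parallel>\<close>.\<close>

lemma nn_integral_power2_symmetric_average:
  fixes G :: "('a \<times> 'b) \<times> 'b \<Rightarrow> real" and f :: "'a \<times> 'b \<Rightarrow> real" and g :: "'a \<Rightarrow> real"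
  assumes M: "prob_space M" and Q: "prob_space Q"
    and [measurable]: "G \<in> borel_measurable ((M \<Otimes>\<^sub>M Q) \<Otimes>\<^sub>M Q)"
      "f \<in> borel_measurable (M \<Otimes>\<^sub>M Q)" "g \<in> borel_measurable M"
    and sym: "\<And>z y y'. z \<in> space M \<Longrightarrow> y \<in> space Q \<Longrightarrow> y' \<in> space Q \<Longrightarrow> G ((z, y), y') = G ((z, y'), y)"
    and G2: "integrable ((M \<Otimes>\<^sub>M Q) \<Otimes>\<^sub>M Q) (\<lambda>x. (G x)\<^sup>2)"
    and f: "AE x in M \<Otimes>\<^sub>M Q. f x = (\<integral>y'. G (x, y') \<partial>Q)"
    and g: "AE z in M. g z = (\<integral>y. f (z, y) \<partial>Q)"
  shows "2 * (\<integral>\<^sup>+x. ennreal ((f x)\<^sup>2) \<partial>(M \<Otimes>\<^sub>M Q))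
     \<le> (\<integral>\<^sup>+x. ennreal ((G x)\<^sup>2) \<partial>((M \<Otimes>\<^sub>M Q) \<Otimes>\<^sub>M Q)) + (\<integral>\<^sup>+z. ennreal ((g z)\<^sup>2) \<partial>M)"
proof -
  interpret MQ: pair_prob_space M Q using M Q by (rule pair_prob_spaceI)
  interpret T: pair_prob_space "M \<Otimes>\<^sub>M Q" Q using MQ.prob_space_axioms Q by (rule pair_prob_spaceI)
  define \<phi> where "\<phi> x = G x - f (fst (fst x), snd x)" for x
  have [measurable]: "\<phi> \<in> borel_measurable ((M \<Otimes>\<^sub>M Q) \<Otimes>\<^sub>M Q)" unfolding \<phi>_def by measurable
  have G: "integrable ((M \<Otimes>\<^sub>M Q) \<Otimes>\<^sub>M Q) G"
    by (rule T.square_integrable_imp_integrable[OF _ G2]) simp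
  have G_split: "(\<integral>\<^sup>+x. ennreal ((G x)\<^sup>2) \<partial>((M \<Otimes>\<^sub>M Q) \<Otimes>\<^sub>M Q)) =
      (\<integral>\<^sup>+x. ennreal ((f x)\<^sup>2) \<partial>(M \<Otimes>\<^sub>M Q)) + (\<integral>\<^sup>+x. ennreal ((G x - f (fst x))\<^sup>2) \<partial>((M \<Otimes>\<^sub>M Q) \<Otimes>\<^sub>M Q))"
    by (rule T.nn_integral_power2_pair_decomp[OF _ _ G2 f]) simp_all
  have G2_finite: "(\<integral>\<^sup>+x. ennreal ((G x)\<^sup>2) \<partial>((M \<Otimes>\<^sub>M Q) \<Otimes>\<^sub>M Q)) < \<infinity>"
    using G2 by (simp add: integrable_power2_iff_nn_integral)
  then have f2: "integrable (M \<Otimes>\<^sub>M Q) (\<lambda>x. (f x)\<^sup>2)"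
    unfolding G_split by (simp add: integrable_power2_iff_nn_integral less_top[symmetric])
  have f_split: "(\<integral>\<^sup>+x. ennreal ((f x)\<^sup>2) \<partial>(M \<Otimes>\<^sub>M Q)) =
      (\<integral>\<^sup>+z. ennreal ((g z)\<^sup>2) \<partial>M) + (\<integral>\<^sup>+x. ennreal ((f x - g (fst x))\<^sup>2) \<partial>(M \<Otimes>\<^sub>M Q))"
    by (rule MQ.nn_integral_power2_pair_decomp[OF _ _ f2]) (use g in \<open>simp_all add: split_beta'\<close>)
  have \<phi>_swap: "(\<integral>\<^sup>+x. ennreal ((\<phi> x)\<^sup>2) \<partial>((M \<Otimes>\<^sub>M Q) \<Otimes>\<^sub>M Q)) =
      (\<integral>\<^sup>+x. ennreal ((G x - f (fst x))\<^sup>2) \<partial>((M \<Otimes>\<^sub>M Q) \<Otimes>\<^sub>M Q))"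
  proof -
    have "(\<integral>\<^sup>+x. ennreal ((\<phi> x)\<^sup>2) \<partial>((M \<Otimes>\<^sub>M Q) \<Otimes>\<^sub>M Q)) =
        (\<integral>\<^sup>+x. (\<lambda>x. ennreal ((G x - f (fst x))\<^sup>2)) ((fst (fst x), snd x), snd (fst x)) \<partial>((M \<Otimes>\<^sub>M Q) \<Otimes>\<^sub>M Q))"
      by (rule nn_integral_cong) (auto simp: \<phi>_def space_pair_measure sym)
    also have "\<dots> = (\<integral>\<^sup>+x. ennreal ((G x - f (fst x))\<^sup>2) \<partial>((M \<Otimes>\<^sub>M Q) \<Otimes>\<^sub>M Q))"
      by (rule nn_integral_pair_measure_swap_snd[OF M Q]) simp
    finally show ?thesis .
  qed
  have \<phi>2: "integrable ((M \<Otimes>\<^sub>M Q) \<Otimes>\<^sub>M Q) (\<lambda>x. (\<phi> x)\<^sup>2)"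
    using G2_finite unfolding G_split \<phi>_swap[symmetric]
    by (simp add: integrable_power2_iff_nn_integral less_top[symmetric])
  have \<phi>_average: "AE x in M \<Otimes>\<^sub>M Q. f x - g (fst x) = (\<integral>y'. \<phi> (x, y') \<partial>Q)"
  proof -
    have "AE z in M. integrable Q (\<lambda>y. f (z, y))"
      using MQ.AE_integrable_fst'[OF MQ.square_integrable_imp_integrable[OF _ f2]] by simp
    from AE_pair_measure_fstI[OF Q this] AE_pair_measure_fstI[OF Q g] T.AE_integrable_fst'[OF G] f
    show ?thesis
      by eventually_elim (simp add: \<phi>_def)
  qed
  have "(\<integral>\<^sup>+x. ennreal ((\<phi> x)\<^sup>2) \<partial>((M \<Otimes>\<^sub>M Q) \<Otimes>\<^sub>M Q)) =
      (\<integral>\<^sup>+x. ennreal ((f x - g (fst x))\<^sup>2) \<partial>(M \<Otimes>\<^sub>M Q)) +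
      (\<integral>\<^sup>+x. ennreal ((\<phi> x - (f (fst x) - g (fst (fst x))))\<^sup>2) \<partial>((M \<Otimes>\<^sub>M Q) \<Otimes>\<^sub>M Q))"
    by (rule T.nn_integral_power2_pair_decomp[OF _ _ \<phi>2 \<phi>_average]) simp_all
  then have "(\<integral>\<^sup>+x. ennreal ((f x - g (fst x))\<^sup>2) \<partial>(M \<Otimes>\<^sub>M Q)) \<le>
      (\<integral>\<^sup>+x. ennreal ((G x - f (fst x))\<^sup>2) \<partial>((M \<Otimes>\<^sub>M Q) \<Otimes>\<^sub>M Q))"
    unfolding \<phi>_swap by (simp add: le_iff_add)
  then show ?thesis
    unfolding G_split mult_2 by (subst (2) f_split) (simp add: add_left_mono ac_simps)
qed

lemma measurable_operation_compose:
  assumes "(\<lambda>(x, y). pl x y) \<in> measurable (R \<Otimes>\<^sub>M R) R"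
    and "a \<in> measurable N R" "b \<in> measurable N R"
  shows "(\<lambda>x. pl (a x) (b x)) \<in> measurable N R"
  using measurable_compose[OF measurable_Pair[OF assms(2,3)] assms(1)] by simp

lemma nn_integral_power2_average_convex:
  fixes pl :: "'a \<Rightarrow> 'a \<Rightarrow> 'a" and F f g :: "'a \<Rightarrow> real"
  assumes M: "prob_space M" and Q: "prob_space Q"
    and sets[measurable_cong]: "sets M = sets R" "sets Q = sets R"
    and pl: "(\<lambda>(x, y). pl x y) \<in> measurable (R \<Otimes>\<^sub>M R) R"
    and comm: "\<And>z y y'. z \<in> space R \<Longrightarrow> y \<in> space R \<Longrightarrow> y' \<in> space R \<Longrightarrow> pl (pl z y) y' = pl (pl z y') y"
    and [measurable]: "F \<in> borel_measurable R" "f \<in> borel_measurable R" "g \<in> borel_measurable R"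
    and F2: "integrable (distr (distr (M \<Otimes>\<^sub>M Q) R (\<lambda>(x, y). pl x y) \<Otimes>\<^sub>M Q) R (\<lambda>(x, y). pl x y)) (\<lambda>x. (F x)\<^sup>2)"
    and f: "AE w in distr (M \<Otimes>\<^sub>M Q) R (\<lambda>(x, y). pl x y). f w = (\<integral>y. F (pl w y) \<partial>Q)"
    and g: "AE z in M. g z = (\<integral>y. f (pl z y) \<partial>Q)"
  shows "2 * (\<integral>\<^sup>+w. ennreal ((f w)\<^sup>2) \<partial>distr (M \<Otimes>\<^sub>M Q) R (\<lambda>(x, y). pl x y))
     \<le> (\<integral>\<^sup>+w. ennreal ((F w)\<^sup>2) \<partial>distr (distr (M \<Otimes>\<^sub>M Q) R (\<lambda>(x, y). pl x y) \<Otimes>\<^sub>M Q) R (\<lambda>(x, y). pl x y))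
       + (\<integral>\<^sup>+z. ennreal ((g z)\<^sup>2) \<partial>M)"
proof -
  interpret MQ: pair_prob_space M Q using M Q by (rule pair_prob_spaceI)
  note [measurable] = pl and [measurable (raw)] = measurable_operation_compose[OF pl]
  define P where "P = distr (M \<Otimes>\<^sub>M Q) R (\<lambda>(x, y). pl x y)"
  define G where "G x = F (pl (pl (fst (fst x)) (snd (fst x))) (snd x))" for x
  have [measurable]: "G \<in> borel_measurable ((M \<Otimes>\<^sub>M Q) \<Otimes>\<^sub>M Q)" unfolding G_def by measurable
  have "P \<Otimes>\<^sub>M distr Q Q (\<lambda>x. x) =
      distr ((M \<Otimes>\<^sub>M Q) \<Otimes>\<^sub>M Q) (R \<Otimes>\<^sub>M Q) (\<lambda>(x, y). ((\<lambda>(a, b). pl a b) x, y))"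
    unfolding P_def by (rule pair_measure_distr) (auto simp: MQ.M2.sigma_finite_measure_axioms)
  then have "P \<Otimes>\<^sub>M Q = distr ((M \<Otimes>\<^sub>M Q) \<Otimes>\<^sub>M Q) (R \<Otimes>\<^sub>M Q) (\<lambda>(x, y). ((\<lambda>(a, b). pl a b) x, y))"
    by simp
  then have P_Q: "distr (P \<Otimes>\<^sub>M Q) R (\<lambda>(x, y). pl x y) =
      distr ((M \<Otimes>\<^sub>M Q) \<Otimes>\<^sub>M Q) R (\<lambda>x. pl (pl (fst (fst x)) (snd (fst x))) (snd x))"
    by (simp only:) (subst distr_distr, auto simp: comp_def split_beta')
  have "2 * (\<integral>\<^sup>+x. ennreal ((f (pl (fst x) (snd x)))\<^sup>2) \<partial>(M \<Otimes>\<^sub>M Q))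
      \<le> (\<integral>\<^sup>+x. ennreal ((G x)\<^sup>2) \<partial>((M \<Otimes>\<^sub>M Q) \<Otimes>\<^sub>M Q)) + (\<integral>\<^sup>+z. ennreal ((g z)\<^sup>2) \<partial>M)"
  proof (rule nn_integral_power2_symmetric_average[OF M Q])
    show "integrable ((M \<Otimes>\<^sub>M Q) \<Otimes>\<^sub>M Q) (\<lambda>x. (G x)\<^sup>2)"
      using F2 unfolding P_def[symmetric] P_Q by (subst (asm) integrable_distr_eq) (auto simp: G_def)
    show "AE x in M \<Otimes>\<^sub>M Q. f (pl (fst x) (snd x)) = (\<integral>y'. G (x, y') \<partial>Q)"
      using AE_distrD[OF _ f] by (simp add: G_def split_beta')
    show "AE z in M. g z = (\<integral>y. f (pl (fst (z, y)) (snd (z, y))) \<partial>Q)"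
      using g by simp
    show "G ((z, y), y') = G ((z, y'), y)" if "z \<in> space M" "y \<in> space Q" "y' \<in> space Q" for z y y'
      using that comm[of z y y'] sets_eq_imp_space_eq[OF sets(1)] sets_eq_imp_space_eq[OF sets(2)]
      by (simp add: G_def)
  qed measurable
  moreover have "(\<integral>\<^sup>+w. ennreal ((f w)\<^sup>2) \<partial>P) = (\<integral>\<^sup>+x. ennreal ((f (pl (fst x) (snd x)))\<^sup>2) \<partial>(M \<Otimes>\<^sub>M Q))"
    unfolding P_def by (subst nn_integral_distr) (auto simp: split_beta')
  moreover have "(\<integral>\<^sup>+w. ennreal ((F w)\<^sup>2) \<partial>distr (P \<Otimes>\<^sub>M Q) R (\<lambda>(x, y). pl x y)) =
      (\<integral>\<^sup>+x. ennreal ((G x)\<^sup>2) \<partial>((M \<Otimes>\<^sub>M Q) \<Otimes>\<^sub>M Q))"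
    unfolding P_Q by (subst nn_integral_distr) (auto simp: G_def)
  ultimately show ?thesis unfolding P_def by simp
qed

lemma average_over_product:
  fixes pl :: "'a \<Rightarrow> 'a \<Rightarrow> 'a" and F f :: "'a \<Rightarrow> real"
  assumes M: "prob_space M" and Q: "prob_space Q"
    and [measurable_cong]: "sets M = sets R" "sets Q = sets R"
    and pl: "(\<lambda>(x, y). pl x y) \<in> measurable (R \<Otimes>\<^sub>M R) R"
    and [measurable]: "F \<in> borel_measurable R"
    and F2: "integrable (distr (M \<Otimes>\<^sub>M Q) R (\<lambda>(x, y). pl x y)) (\<lambda>x. (F x)\<^sup>2)"
  shows AE_integrable_fibre: "AE z in M. integrable Q (\<lambda>y. F (pl z y))"
    and average_square_integrable: "f \<in> borel_measurable R \<Longrightarrow> AE z in M. f z = (\<integral>y. F (pl z y) \<partial>Q) \<Longrightarrow>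
      integrable M (\<lambda>x. (f x)\<^sup>2)"
    and integral_average: "f \<in> borel_measurable R \<Longrightarrow> AE z in M. f z = (\<integral>y. F (pl z y) \<partial>Q) \<Longrightarrow>
      (\<integral>x. F x \<partial>distr (M \<Otimes>\<^sub>M Q) R (\<lambda>(x, y). pl x y)) = (\<integral>x. f x \<partial>M)"
proof -
  interpret MQ: pair_prob_space M Q using M Q by (rule pair_prob_spaceI)
  note [measurable] = pl and [measurable (raw)] = measurable_operation_compose[OF pl]
  define G where "G x = F (pl (fst x) (snd x))" for x
  have [measurable]: "G \<in> borel_measurable (M \<Otimes>\<^sub>M Q)" unfolding G_def by measurable
  have G2: "integrable (M \<Otimes>\<^sub>M Q) (\<lambda>x. (G x)\<^sup>2)"
    using F2 by (subst (asm) integrable_distr_eq) (auto simp: G_def split_beta')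
  have G: "integrable (M \<Otimes>\<^sub>M Q) G"
    by (rule MQ.square_integrable_imp_integrable[OF _ G2]) simp
  show "AE z in M. integrable Q (\<lambda>y. F (pl z y))"
    using MQ.AE_integrable_fst'[OF G] by (simp add: G_def)
  assume [measurable]: "f \<in> borel_measurable R" and f: "AE z in M. f z = (\<integral>y. F (pl z y) \<partial>Q)"
  have "(\<integral>\<^sup>+x. ennreal ((G x)\<^sup>2) \<partial>(M \<Otimes>\<^sub>M Q)) =
      (\<integral>\<^sup>+z. ennreal ((f z)\<^sup>2) \<partial>M) + (\<integral>\<^sup>+x. ennreal ((G x - f (fst x))\<^sup>2) \<partial>(M \<Otimes>\<^sub>M Q))"
    by (rule MQ.nn_integral_power2_pair_decomp[OF _ _ G2]) (use f in \<open>auto simp: G_def\<close>)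
  with G2 show "integrable M (\<lambda>x. (f x)\<^sup>2)"
    by (simp add: integrable_power2_iff_nn_integral less_top[symmetric])
  have "(\<integral>x. F x \<partial>distr (M \<Otimes>\<^sub>M Q) R (\<lambda>(x, y). pl x y)) = (\<integral>x. G x \<partial>(M \<Otimes>\<^sub>M Q))"
    by (subst integral_distr) (auto simp: G_def[abs_def] split_beta')
  also have "\<dots> = (\<integral>z. (\<integral>y. G (z, y) \<partial>Q) \<partial>M)"
    by (rule MQ.integral_fst'[OF G, symmetric])
  also have "\<dots> = (\<integral>z. f z \<partial>M)"
    by (rule integral_cong_AE) (use f in \<open>auto simp: G_def\<close>)
  finally show "(\<integral>x. F x \<partial>distr (M \<Otimes>\<^sub>M Q) R (\<lambda>(x, y). pl x y)) = (\<integral>x. f x \<partial>M)" .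
qed

lemma midpoint_convex_secant_le:
  fixes s :: "nat \<Rightarrow> real"
  assumes N: "N > 1" and convex: "\<And>m. 1 \<le> m \<Longrightarrow> m < N \<Longrightarrow> 2 * s m \<le> s (Suc m) + s (m - 1)"
  shows "real N * (s (N - 1) - s 0) \<le> real (N - 1) * (s N - s 0)"
proof -
  define d where "d m = s (Suc m) - s m" for m
  have d_mono: "d m \<le> d (N - 1)" if "m \<le> N - 1" for m
    using that
  proof (induction "N - 1 - m" arbitrary: m)
    case 0 then have "m = N - 1" by simp
    then show ?case by simp
  next
    case (Suc k)
    then have "d (Suc m) \<le> d (N - 1)" by simp
    moreover have "Suc m < N" using Suc.hyps Suc.prems by simp
    then have "d m \<le> d (Suc m)" using convex[of "Suc m"] by (simp add: d_def)
    ultimately show ?case by simp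
  qed
  have tel: "s (N - 1) - s 0 = (\<Sum>m<N - 1. d m)" unfolding d_def by (simp add: sum_lessThan_telescope)
  have "(\<Sum>m<N - 1. d m) \<le> (\<Sum>m<N - 1. d (N - 1))" by (intro sum_mono d_mono) simp
  then have le1: "s (N - 1) - s 0 \<le> real (N - 1) * d (N - 1)" using tel by simp
  have dN: "d (N - 1) = s N - s (N - 1)" using N by (simp add: d_def)
  have rN: "real N = real (N - 1) + 1" using N by simp
  show ?thesis using le1 unfolding dN rN by (simp add: algebra_simps)
qed


lemma real_distribution_convolution:
  assumes "real_distribution F" "real_distribution G"
  shows "real_distribution (F \<star> G)"
proof -
  interpret F: real_distribution F by fact
  interpret G: real_distribution G by fact
  interpret pair_prob_space F G ..
  have "prob_space (F \<star> G)"
    unfolding convolution_def by (rule prob_space_distr) simp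
  then show ?thesis by (simp add: real_distribution_def real_distribution_axioms_def)
qed

lemma integrable_power2_convolution:
  assumes F: "real_distribution F" "integrable F (\<lambda>x. x\<^sup>2)"
    and G: "real_distribution G" "integrable G (\<lambda>x. x\<^sup>2)"
  shows "integrable (F \<star> G) (\<lambda>x. x\<^sup>2)"
proof -
  interpret F: real_distribution F by fact
  interpret G: real_distribution G by fact
  have finite: "(\<integral>\<^sup>+x. ennreal (2 * x\<^sup>2) \<partial>M) < \<infinity>" if "integrable M (\<lambda>x. x\<^sup>2)" "sets M = sets borel"
    for M :: "real measure"
    using that by (simp add: integrable_iff_bounded measurable_cong_sets[OF that(2) refl] ennreal_mult
      nn_integral_cmult ennreal_mult_less_top)
  have "(\<integral>\<^sup>+x. ennreal (x\<^sup>2) \<partial>(F \<star> G)) = (\<integral>\<^sup>+x. \<integral>\<^sup>+y. ennreal ((x + y)\<^sup>2) \<partial>G \<partial>F)"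
    by (rule nn_integral_convolution) auto
  also have "\<dots> \<le> (\<integral>\<^sup>+x. \<integral>\<^sup>+y. ennreal (2 * x\<^sup>2) + ennreal (2 * y\<^sup>2) \<partial>G \<partial>F)"
  proof (intro nn_integral_mono)
    fix x y :: real
    have "(x + y)\<^sup>2 \<le> 2 * x\<^sup>2 + 2 * y\<^sup>2"
      using sum_squares_ge_zero[of "x - y" 0] by (simp add: power2_eq_square algebra_simps)
    then show "ennreal ((x + y)\<^sup>2) \<le> ennreal (2 * x\<^sup>2) + ennreal (2 * y\<^sup>2)"
      by (simp add: ennreal_plus[symmetric] del: ennreal_plus)
  qed
  also have "\<dots> = (\<integral>\<^sup>+x. ennreal (2 * x\<^sup>2) \<partial>F) + (\<integral>\<^sup>+y. ennreal (2 * y\<^sup>2) \<partial>G)"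
    using F.emeasure_space_1 G.emeasure_space_1 by (simp add: nn_integral_add)
  also have "\<dots> < \<infinity>"
    using finite[OF F(2) F.events_eq_borel] finite[OF G(2) G.events_eq_borel] by (simp add: less_top[symmetric])
  finally show ?thesis by (simp add: integrable_iff_bounded)
qed

lemma convolution_return_0:
  assumes "real_distribution H"
  shows "return borel 0 \<star> H = H"
proof (rule measure_eqI)
  interpret H: real_distribution H by fact
  show "sets (return borel 0 \<star> H) = sets H" by simp
  fix A assume "A \<in> sets (return borel 0 \<star> H)"
  then have A[measurable]: "A \<in> sets borel" by simp
  have "emeasure (return borel 0 \<star> H) A = (\<integral>\<^sup>+x. \<integral>\<^sup>+y. indicator A (x + y) \<partial>H \<partial>return borel 0)"
    by (rule convolution_emeasure')
      (auto intro!: prob_space.finite_measure prob_space_return)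
  also have "\<dots> = (\<integral>\<^sup>+y. indicator A (0 + y) \<partial>H)"
  proof (rule nn_integral_return)
    have "(\<lambda>(x, y). indicator A (x + y) :: ennreal) \<in> borel_measurable (borel \<Otimes>\<^sub>M H)"
      unfolding measurable_cong_sets[OF sets_pair_measure_cong[OF refl H.events_eq_borel] refl] by measurable
    then show "(\<lambda>x. \<integral>\<^sup>+y. indicator A (x + y) \<partial>H) \<in> borel_measurable borel"
      by (rule H.borel_measurable_nn_integral[of "\<lambda>x y. indicator A (x + y)", simplified])
  qed simp
  also have "\<dots> = emeasure H A" using A by simp
  finally show "emeasure (return borel 0 \<star> H) A = emeasure H A" .
qed

lemma conv_pow_induct:
  assumes "P (return borel 0)" "P H" "\<And>F. P F \<Longrightarrow> P (F \<star> H)"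
  shows "P (conv_pow H m)"
proof (cases m)
  case (Suc k)
  have "P (conv_pow H (Suc k))" by (induction k) (simp_all add: assms)
  then show ?thesis by (simp add: Suc)
qed (simp add: assms)

lemma real_distribution_return: "real_distribution (return borel x)"
  by (simp add: real_distribution_def real_distribution_axioms_def prob_space_return)

lemma real_distribution_conv_pow:
  assumes "real_distribution H"
  shows "real_distribution (conv_pow H m)"
  using real_distribution_return assms real_distribution_convolution[OF _ assms]
  by (rule conv_pow_induct)

lemma integrable_power2_conv_pow:
  assumes "real_distribution H" "integrable H (\<lambda>x. x\<^sup>2)"
  shows "integrable (conv_pow H m) (\<lambda>x. x\<^sup>2)"
proof -
  have "real_distribution (conv_pow H m) \<and> integrable (conv_pow H m) (\<lambda>x. x\<^sup>2)"
  proof (rule conv_pow_induct)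
    have "(\<lambda>x::real. ennreal (norm (x\<^sup>2))) \<in> borel_measurable borel" by measurable
    then have "(\<integral>\<^sup>+x. ennreal (norm (x\<^sup>2)) \<partial>return borel (0::real)) < \<infinity>"
      by (simp add: nn_integral_return)
    then have "integrable (return borel 0) (\<lambda>x::real. x\<^sup>2)"
      by (subst integrable_iff_bounded) simp
    then show "real_distribution (return borel 0) \<and> integrable (return borel (0::real)) (\<lambda>x. x\<^sup>2)"
      by (simp add: real_distribution_return)
  qed (use assms integrable_power2_convolution real_distribution_convolution in auto)
  then show ?thesis ..
qed

lemma indicator_PiE_restrict:
  assumes "finite I"
  shows "indicator (Pi\<^sub>E I A) (restrict c I) = (\<Prod>i\<in>I. indicator (A i) (c i) :: ennreal)"
proof (cases "\<forall>i\<in>I. c i \<in> A i")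
  case True
  then show ?thesis by (simp add: indicator_def PiE_iff)
next
  case False
  then show ?thesis using assms by (auto simp: indicator_def PiE_iff)
qed

lemma PiM_convolution:
  fixes F G :: "real measure"
  assumes F: "real_distribution F" and G: "real_distribution G" and I: "finite I"
  shows "distr (PiM I (\<lambda>_. F) \<Otimes>\<^sub>M PiM I (\<lambda>_. G)) (PiM I (\<lambda>_. borel)) (\<lambda>(a, b). \<lambda>i\<in>I. a i + b i)
    = PiM I (\<lambda>_. F \<star> G)"
proof -
  interpret F: real_distribution F by fact
  interpret G: real_distribution G by fact
  interpret FG: real_distribution "F \<star> G" using F G by (rule real_distribution_convolution)
  interpret PF: product_prob_space "\<lambda>_. F" by standard
  interpret PG: product_prob_space "\<lambda>_. G" by standard
  interpret PFG: product_prob_space "\<lambda>_. F \<star> G" by standard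
  have PiG: "sigma_finite_measure (PiM I (\<lambda>_. G))"
    by (intro prob_space_imp_sigma_finite prob_space_PiM G.prob_space_axioms)
  define add where "add x = (\<lambda>i\<in>I. fst x i + snd x i :: real)" for x :: "(_ \<Rightarrow> real) \<times> (_ \<Rightarrow> real)"
  have [measurable]: "add \<in> measurable (PiM I (\<lambda>_. F) \<Otimes>\<^sub>M PiM I (\<lambda>_. G)) (PiM I (\<lambda>_. borel))"
    unfolding add_def by measurable
  have "distr (PiM I (\<lambda>_. F) \<Otimes>\<^sub>M PiM I (\<lambda>_. G)) (PiM I (\<lambda>_. borel)) add = PiM I (\<lambda>_. F \<star> G)"
  proof (rule PFG.PiM_eqI[OF I])
    show "sets (distr (PiM I (\<lambda>_. F) \<Otimes>\<^sub>M PiM I (\<lambda>_. G)) (PiM I (\<lambda>_. borel)) add) = sets (PiM I (\<lambda>_. F \<star> G))"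
      unfolding sets_distr by (rule sets_PiM_cong) simp_all
    fix A assume A: "\<And>i. i \<in> I \<Longrightarrow> A i \<in> sets (F \<star> G)"
    then have [measurable]: "A i \<in> sets borel" if "i \<in> I" for i using that by simp
    have box: "Pi\<^sub>E I A \<in> sets (PiM I (\<lambda>_. borel))" using A I by (intro sets_PiM_I_finite) auto
    have "emeasure (distr (PiM I (\<lambda>_. F) \<Otimes>\<^sub>M PiM I (\<lambda>_. G)) (PiM I (\<lambda>_. borel)) add) (Pi\<^sub>E I A) =
        (\<integral>\<^sup>+x. indicator (Pi\<^sub>E I A) (add x) \<partial>(PiM I (\<lambda>_. F) \<Otimes>\<^sub>M PiM I (\<lambda>_. G)))"
      using box by (simp add: nn_integral_distr nn_integral_indicator[symmetric] del: nn_integral_indicator)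
    also have "\<dots> = (\<integral>\<^sup>+x. (\<Prod>i\<in>I. indicator (A i) (fst x i + snd x i)) \<partial>(PiM I (\<lambda>_. F) \<Otimes>\<^sub>M PiM I (\<lambda>_. G)))"
      by (simp add: add_def indicator_PiE_restrict[OF I])
    also have "\<dots> = (\<integral>\<^sup>+a. \<integral>\<^sup>+b. (\<Prod>i\<in>I. indicator (A i) (a i + b i)) \<partial>PiM I (\<lambda>_. G) \<partial>PiM I (\<lambda>_. F))"
    proof -
      have "(\<lambda>x. \<Prod>i\<in>I. indicator (A i) (fst x i + snd x i) :: ennreal)
          \<in> borel_measurable (PiM I (\<lambda>_. F) \<Otimes>\<^sub>M PiM I (\<lambda>_. G))" by measurable
      from sigma_finite_measure.nn_integral_fst[OF PiG this] show ?thesis by simp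
    qed
    also have "\<dots> = (\<integral>\<^sup>+a. (\<Prod>i\<in>I. \<integral>\<^sup>+y. indicator (A i) (a i + y) \<partial>G) \<partial>PiM I (\<lambda>_. F))"
      by (intro nn_integral_cong PG.product_nn_integral_prod[OF I]) simp
    also have "\<dots> = (\<Prod>i\<in>I. \<integral>\<^sup>+x. \<integral>\<^sup>+y. indicator (A i) (x + y) \<partial>G \<partial>F)"
      by (rule PF.product_nn_integral_prod[OF I, of "\<lambda>i x. \<integral>\<^sup>+y. indicator (A i) (x + y) \<partial>G"]) measurable
    also have "\<dots> = (\<Prod>i\<in>I. emeasure (F \<star> G) (A i))"
      using A by (intro prod.cong refl convolution_emeasure'[symmetric]) auto
    finally show "emeasure (distr (PiM I (\<lambda>_. F) \<Otimes>\<^sub>M PiM I (\<lambda>_. G)) (PiM I (\<lambda>_. borel)) add) (Pi\<^sub>E I A) =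
        (\<Prod>i\<in>I. emeasure (F \<star> G) (A i))" .
  qed
  moreover have "(\<lambda>(a, b). \<lambda>i\<in>I. a i + b i) = add" by (auto simp: add_def)
  ultimately show ?thesis by simp
qed

definition vec_borel :: "nat \<Rightarrow> (nat \<Rightarrow> real) measure" where
  "vec_borel n = PiM {..<n} (\<lambda>_. borel)"

definition vec_add :: "nat \<Rightarrow> (nat \<Rightarrow> real) \<Rightarrow> (nat \<Rightarrow> real) \<Rightarrow> nat \<Rightarrow> real" where
  "vec_add n a b = (\<lambda>i\<in>{..<n}. a i + b i)"

lemma measurable_vec_add[measurable]:
  "(\<lambda>(a, b). vec_add n a b) \<in> measurable (vec_borel n \<Otimes>\<^sub>M vec_borel n) (vec_borel n)"
  unfolding vec_add_def vec_borel_def split_beta' by measurable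

lemma vec_add_right_commute: "vec_add n (vec_add n z y) y' = vec_add n (vec_add n z y') y"
  by (auto simp: vec_add_def fun_eq_iff)

lemma sets_sample: "sets F = sets borel \<Longrightarrow> sets (sample n F) = sets (vec_borel n)"
  unfolding sample_def vec_borel_def by (rule sets_PiM_cong) simp_all

lemma sample_convolution:
  assumes "real_distribution F" "real_distribution G"
  shows "sample n (F \<star> G) = distr (sample n F \<Otimes>\<^sub>M sample n G) (vec_borel n) (\<lambda>(a, b). vec_add n a b)"
  using PiM_convolution[OF assms finite_lessThan] by (simp add: sample_def vec_borel_def vec_add_def)

lemma sample_conv_pow_Suc:
  assumes "real_distribution H"
  shows "sample n (conv_pow H (Suc m)) =
    distr (sample n (conv_pow H m) \<Otimes>\<^sub>M sample n H) (vec_borel n) (\<lambda>(a, b). vec_add n a b)"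
proof (cases m)
  case 0
  then show ?thesis
    using sample_convolution[OF real_distribution_return[of 0] assms] convolution_return_0[OF assms] by simp
next
  case (Suc k)
  then show ?thesis using sample_convolution[OF real_distribution_conv_pow[OF assms] assms] by simp
qed

text \<open>Where the average is undefined, the fallback \<open>z 0\<close> is itself equivariant, so averaging
  preserves equivariance everywhere and not only almost everywhere.\<close>

definition shift_average ::
    "nat \<Rightarrow> (nat \<Rightarrow> real) measure \<Rightarrow> ((nat \<Rightarrow> real) \<Rightarrow> real) \<Rightarrow> (nat \<Rightarrow> real) \<Rightarrow> real" where
  "shift_average n Q u z =
    (if integrable Q (\<lambda>y. u (vec_add n z y)) then \<integral>y. u (vec_add n z y) \<partial>Q else z 0)"

lemma borel_measurable_shift_average:
  assumes "prob_space Q" and [measurable_cong]: "sets Q = sets (vec_borel n)" and "0 < n"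
    and [measurable]: "u \<in> borel_measurable (vec_borel n)"
  shows "shift_average n Q u \<in> borel_measurable (vec_borel n)"
proof -
  interpret Q: prob_space Q by fact
  have [measurable]: "(\<lambda>z. z 0) \<in> borel_measurable (vec_borel n)"
    unfolding vec_borel_def using \<open>0 < n\<close> by (intro measurable_component_singleton) auto
  have "(\<lambda>z. if (\<integral>\<^sup>+y. ennreal (norm (u (vec_add n z y))) \<partial>Q) < \<infinity> then \<integral>y. u (vec_add n z y) \<partial>Q else z 0)
      \<in> borel_measurable (vec_borel n)"
    by measurable
  moreover have "shift_average n Q u z =
      (if (\<integral>\<^sup>+y. ennreal (norm (u (vec_add n z y))) \<partial>Q) < \<infinity> then \<integral>y. u (vec_add n z y) \<partial>Q else z 0)"
    if "z \<in> space (vec_borel n)" for z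
    using that by (simp add: shift_average_def integrable_iff_bounded)
  ultimately show ?thesis by (subst measurable_cong) auto
qed

lemma equivariant_shift_average:
  assumes "prob_space Q" and "0 < n" and u: "equivariant n u"
  shows "equivariant n (shift_average n Q u)"
  unfolding equivariant_def
proof (intro ballI allI)
  interpret Q: prob_space Q by fact
  fix x :: "nat \<Rightarrow> real" and c :: real
  define x' where "x' = restrict (\<lambda>i. x i + c) {..<n}"
  have shift: "u (vec_add n x' y) = u (vec_add n x y) + c" for y
  proof -
    have "vec_add n x' y = restrict (\<lambda>i. vec_add n x y i + c) {..<n}"
      by (auto simp: x'_def vec_add_def fun_eq_iff)
    moreover have "vec_add n x y \<in> space (PiM {..<n} (\<lambda>_. borel))"
      by (simp add: vec_add_def space_PiM)
    ultimately show ?thesis using u unfolding equivariant_def by simp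
  qed
  have "integrable Q (\<lambda>y. u (vec_add n x' y)) \<longleftrightarrow> integrable Q (\<lambda>y. u (vec_add n x y))"
  proof
    assume "integrable Q (\<lambda>y. u (vec_add n x' y))"
    then have "integrable Q (\<lambda>y. u (vec_add n x' y) - c)" by simp
    then show "integrable Q (\<lambda>y. u (vec_add n x y))" unfolding shift by simp
  next
    assume "integrable Q (\<lambda>y. u (vec_add n x y))"
    then have "integrable Q (\<lambda>y. u (vec_add n x y) + c)" by simp
    then show "integrable Q (\<lambda>y. u (vec_add n x' y))" unfolding shift by simp
  qed
  moreover have "x' 0 = x 0 + c" using \<open>0 < n\<close> by (simp add: x'_def)
  ultimately show "shift_average n Q u (restrict (\<lambda>i. x i + c) {..<n}) = shift_average n Q u x + c"
    unfolding x'_def[symmetric] shift_average_def shift by (simp add: Q.prob_space)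
qed

lemma pitman_var_le_variance:
  assumes "real_distribution F" and "t \<in> borel_measurable (sample n F)"
    and "equivariant n t" and "integrable (sample n F) (\<lambda>x. (t x)\<^sup>2)"
  shows "pitman_var n F \<le> prob_space.variance (sample n F) t"
  unfolding pitman_var_def
proof (rule cInf_lower)
  interpret S: prob_space "sample n F"
    unfolding sample_def using assms(1) by (intro prob_space_PiM) (simp add: real_distribution_def)
  show "prob_space.variance (sample n F) t \<in> {prob_space.variance (sample n F) t | t.
      t \<in> borel_measurable (sample n F) \<and> equivariant n t \<and> integrable (sample n F) (\<lambda>x. (t x)\<^sup>2)}"
    using assms(2-4) by blast
  show "bdd_below {prob_space.variance (sample n F) t | t.
      t \<in> borel_measurable (sample n F) \<and> equivariant n t \<and> integrable (sample n F) (\<lambda>x. (t x)\<^sup>2)}"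
    by (rule bdd_belowI[of _ 0]) (auto intro: S.variance_positive)
qed

text \<open>The set of admissible estimators is nonempty: it contains the first observation.\<close>

lemma le_pitman_var:
  assumes F: "real_distribution F" "integrable F (\<lambda>x. x\<^sup>2)" and "0 < n"
    and le: "\<And>t. t \<in> borel_measurable (sample n F) \<Longrightarrow> equivariant n t \<Longrightarrow>
      integrable (sample n F) (\<lambda>x. (t x)\<^sup>2) \<Longrightarrow> c \<le> prob_space.variance (sample n F) t"
  shows "c \<le> pitman_var n F"
  unfolding pitman_var_def
proof (rule cInf_greatest)
  interpret F: real_distribution F by (fact F(1))
  have first[measurable]: "(\<lambda>x. x 0) \<in> measurable (sample n F) F"
    unfolding sample_def using \<open>0 < n\<close> by (intro measurable_component_singleton) auto
  have "distr (sample n F) F (\<lambda>x. x 0) = F"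
    unfolding sample_def using \<open>0 < n\<close> by (intro distr_PiM_component) (auto intro: F.prob_space_axioms)
  with F(2) have "integrable (distr (sample n F) F (\<lambda>x. x 0)) (\<lambda>x. x\<^sup>2)" by simp
  moreover have "(\<lambda>x::real. x\<^sup>2) \<in> borel_measurable F" by measurable
  ultimately have "integrable (sample n F) (\<lambda>x. (x 0)\<^sup>2)"
    by (simp add: integrable_distr_eq[OF first])
  moreover have "equivariant n (\<lambda>x. x 0)"
    unfolding equivariant_def using \<open>0 < n\<close> by simp
  moreover have "(\<lambda>x. x 0) \<in> borel_measurable (sample n F)"
    using first by (simp add: measurable_cong_sets[OF refl F.events_eq_borel])
  ultimately show "{prob_space.variance (sample n F) t | t.
      t \<in> borel_measurable (sample n F) \<and> equivariant n t \<and> integrable (sample n F) (\<lambda>x. (t x)\<^sup>2)} \<noteq> {}"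
    by blast
qed (use le in blast)

text \<open>\<open>P m\<close> is the law of a sample from \<open>H\<^sup>m\<close>, the sum of \<open>m\<close> independent samples from \<open>H\<close>;
  \<open>F j\<close> is the conditional expectation of \<open>t\<close> given the first \<open>N - j\<close> of its \<open>N\<close> summands.\<close>

locale pitman_step =
  fixes H :: "real measure" and n N :: nat and t :: "(nat \<Rightarrow> real) \<Rightarrow> real"
  assumes H: "real_distribution H" and n: "0 < n" and N: "1 < N"
    and t_measurable: "t \<in> borel_measurable (vec_borel n)"
    and t_equivariant: "equivariant n t"
    and t_square: "integrable (sample n (conv_pow H N)) (\<lambda>x. (t x)\<^sup>2)"
begin

abbreviation "P m \<equiv> sample n (conv_pow H m)"
abbreviation "Q \<equiv> sample n H"
abbreviation "F j \<equiv> (shift_average n Q ^^ j) t"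

lemma prob_space_P: "prob_space (P m)"
  unfolding sample_def using real_distribution_conv_pow[OF H]
  by (intro prob_space_PiM) (simp add: real_distribution_def)

lemma sets_P: "sets (P m) = sets (vec_borel n)"
  using real_distribution_conv_pow[OF H, of m] by (intro sets_sample) (simp add: real_distribution_def
    real_distribution_axioms_def)

lemma prob_space_Q: "prob_space Q" and sets_Q: "sets Q = sets (vec_borel n)"
  using prob_space_P[of 1] sets_P[of 1] by simp_all

lemma P_Suc: "P (Suc m) = distr (P m \<Otimes>\<^sub>M Q) (vec_borel n) (\<lambda>(a, b). vec_add n a b)"
  by (rule sample_conv_pow_Suc[OF H])

lemma F_measurable: "F j \<in> borel_measurable (vec_borel n)"
  by (induction j) (simp_all add: t_measurable borel_measurable_shift_average[OF prob_space_Q sets_Q n])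

lemma F_step:
  assumes j: "j < N" and F2: "integrable (P (N - j)) (\<lambda>x. (F j x)\<^sup>2)"
  shows "AE z in P (N - Suc j). F (Suc j) z = (\<integral>y. F j (vec_add n z y) \<partial>Q)"
    and "integrable (P (N - Suc j)) (\<lambda>x. (F (Suc j) x)\<^sup>2)"
    and "(\<integral>x. F j x \<partial>P (N - j)) = (\<integral>x. F (Suc j) x \<partial>P (N - Suc j))"
proof -
  have split: "P (N - j) = distr (P (N - Suc j) \<Otimes>\<^sub>M Q) (vec_borel n) (\<lambda>(a, b). vec_add n a b)"
    using P_Suc[of "N - Suc j"] j by (simp add: Suc_diff_Suc)
  note average = average_over_product[OF prob_space_P prob_space_Q sets_P sets_Q measurable_vec_add
      F_measurable, of "N - Suc j" j, OF F2[unfolded split]]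
  show ae: "AE z in P (N - Suc j). F (Suc j) z = (\<integral>y. F j (vec_add n z y) \<partial>Q)"
    using average(1) by eventually_elim (simp add: shift_average_def)
  show "integrable (P (N - Suc j)) (\<lambda>x. (F (Suc j) x)\<^sup>2)"
    using average(2)[OF F_measurable ae] .
  show "(\<integral>x. F j x \<partial>P (N - j)) = (\<integral>x. F (Suc j) x \<partial>P (N - Suc j))"
    using average(3)[OF F_measurable ae] split by simp
qed

lemma F_square_integrable: "j \<le> N \<Longrightarrow> integrable (P (N - j)) (\<lambda>x. (F j x)\<^sup>2)"
proof (induction j)
  case 0
  then show ?case using t_square by simp
next
  case (Suc j)
  then show ?case using F_step(2)[of j] by simp
qed

lemma AE_F_Suc: "j < N \<Longrightarrow> AE z in P (N - Suc j). F (Suc j) z = (\<integral>y. F j (vec_add n z y) \<partial>Q)"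
  using F_step(1) F_square_integrable by simp

lemma integral_F: "j \<le> N \<Longrightarrow> (\<integral>x. F j x \<partial>P (N - j)) = (\<integral>x. t x \<partial>P N)"
proof (induction j)
  case (Suc j)
  then show ?case using F_step(3)[of j] F_square_integrable[of j] by simp
qed simp

definition second_moment :: "nat \<Rightarrow> real" where
  "second_moment m = (\<integral>x. (F (N - m) x)\<^sup>2 \<partial>P m)"

lemma second_moment_nonneg: "0 \<le> second_moment m"
  by (simp add: second_moment_def)

lemma nn_integral_F_square: "m \<le> N \<Longrightarrow> (\<integral>\<^sup>+x. ennreal ((F (N - m) x)\<^sup>2) \<partial>P m) = ennreal (second_moment m)"
  unfolding second_moment_def using F_square_integrable[of "N - m"]
  by (intro nn_integral_eq_integral) auto

lemma second_moment_midpoint_convex: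
  assumes m: "1 \<le> m" "m < N"
  shows "2 * second_moment m \<le> second_moment (Suc m) + second_moment (m - 1)"
proof -
  define a where "a = N - Suc m"
  have a: "N - m = Suc a" "N - Suc m = a" "N - (m - 1) = Suc (Suc a)" "a < N" "Suc a < N"
    "N - a = Suc m" "N - Suc a = m" "N - Suc (Suc a) = m - 1"
    using m by (auto simp: a_def)
  have P_m: "distr (P (m - 1) \<Otimes>\<^sub>M Q) (vec_borel n) (\<lambda>(a, b). vec_add n a b) = P m"
    using P_Suc[of "m - 1"] m by simp
  have P_Suc_m: "distr (P m \<Otimes>\<^sub>M Q) (vec_borel n) (\<lambda>(a, b). vec_add n a b) = P (Suc m)"
    using P_Suc[of m] by simp
  have "integrable (P (Suc m)) (\<lambda>x. (F a x)\<^sup>2)" using F_square_integrable[of a] a by simp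
  moreover have "AE w in P m. F (Suc a) w = (\<integral>y. F a (vec_add n w y) \<partial>Q)"
    using AE_F_Suc[OF a(4)] unfolding a(7) .
  moreover have "AE z in P (m - 1). F (Suc (Suc a)) z = (\<integral>y. F (Suc a) (vec_add n z y) \<partial>Q)"
    using AE_F_Suc[OF a(5)] unfolding a(8) .
  ultimately have "2 * (\<integral>\<^sup>+w. ennreal ((F (Suc a) w)\<^sup>2) \<partial>P m) \<le>
      (\<integral>\<^sup>+w. ennreal ((F a w)\<^sup>2) \<partial>P (Suc m)) + (\<integral>\<^sup>+z. ennreal ((F (Suc (Suc a)) z)\<^sup>2) \<partial>P (m - 1))"
    using nn_integral_power2_average_convex[OF prob_space_P prob_space_Q sets_P sets_Q measurable_vec_add
        vec_add_right_commute F_measurable F_measurable F_measurable, of "m - 1" a "Suc a" "Suc (Suc a)"]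
    unfolding P_m P_Suc_m by simp
  then have "2 * ennreal (second_moment m) \<le> ennreal (second_moment (Suc m)) + ennreal (second_moment (m - 1))"
    using nn_integral_F_square[of m] nn_integral_F_square[of "Suc m"] nn_integral_F_square[of "m - 1"] m a
    by simp
  then have "ennreal (2 * second_moment m) \<le> ennreal (second_moment (Suc m) + second_moment (m - 1))"
    by (simp add: ennreal_mult ennreal_plus[symmetric] second_moment_nonneg del: ennreal_plus)
  then show ?thesis by (subst (asm) ennreal_le_iff) (auto intro: add_nonneg_nonneg second_moment_nonneg)
qed

lemma second_moment_0: "second_moment 0 = (\<integral>x. t x \<partial>P N)\<^sup>2"
proof -
  have P0: "P 0 = return (vec_borel n) (\<lambda>i\<in>{..<n}. 0)"
    unfolding sample_def vec_borel_def by (simp add: PiM_return)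
  have zero: "(\<lambda>i\<in>{..<n}. 0::real) \<in> space (vec_borel n)" by (simp add: vec_borel_def space_PiM)
  have "(\<integral>x. F N x \<partial>P 0) = (\<integral>x. t x \<partial>P N)" using integral_F[of N] by simp
  then show ?thesis
    unfolding second_moment_def P0 using F_measurable[of N] zero by (simp add: integral_return)
qed

theorem variance_shift_average_le:
  "real N * prob_space.variance (P (N - 1)) (F 1) \<le> real (N - 1) * prob_space.variance (P N) t"
proof -
  interpret PN: prob_space "P N" by (rule prob_space_P)
  interpret PN1: prob_space "P (N - 1)" by (rule prob_space_P)
  define \<mu> where "\<mu> = (\<integral>x. t x \<partial>P N)"
  have t: "integrable (P N) t"
    by (rule PN.square_integrable_imp_integrable[OF _ t_square])
      (simp add: measurable_cong_sets[OF sets_P refl] t_measurable)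
  have F1_square: "integrable (P (N - 1)) (\<lambda>x. (F 1 x)\<^sup>2)" using F_square_integrable[of 1] N by simp
  have F1: "integrable (P (N - 1)) (F 1)"
    by (rule PN1.square_integrable_imp_integrable[OF _ F1_square])
      (use F_measurable[of 1] in \<open>simp add: measurable_cong_sets[OF sets_P refl]\<close>)
  have "PN.variance t = second_moment N - \<mu>\<^sup>2"
    using PN.variance_eq[OF t t_square] by (simp add: second_moment_def \<mu>_def)
  moreover have "PN1.variance (F 1) = second_moment (N - 1) - \<mu>\<^sup>2"
    using PN1.variance_eq[OF F1 F1_square] integral_F[of 1] N by (simp add: second_moment_def \<mu>_def)
  moreover have "real N * (second_moment (N - 1) - second_moment 0) \<le>
      real (N - 1) * (second_moment N - second_moment 0)"
    using N second_moment_midpoint_convex by (rule midpoint_convex_secant_le)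
  ultimately show ?thesis by (simp add: second_moment_0 \<mu>_def)
qed


theorem scaled_pitman_var_le_variance:
  "real N * pitman_var n (conv_pow H (N - 1)) \<le> real (N - 1) * prob_space.variance (P N) t"
proof -
  have "pitman_var n (conv_pow H (N - 1)) \<le> prob_space.variance (P (N - 1)) (F 1)"
  proof (rule pitman_var_le_variance[OF real_distribution_conv_pow[OF H]])
    show "F 1 \<in> borel_measurable (P (N - 1))"
      using F_measurable[of 1] by (simp add: measurable_cong_sets[OF sets_P refl])
    show "equivariant n (F 1)"
      using equivariant_shift_average[OF prob_space_Q n t_equivariant] by simp
    show "integrable (P (N - 1)) (\<lambda>x. (F 1 x)\<^sup>2)"
      using F_square_integrable[of 1] N by simp
  qed
  then have "real N * pitman_var n (conv_pow H (N - 1)) \<le> real N * prob_space.variance (P (N - 1)) (F 1)"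
    by (rule mult_left_mono) simp
  also have "\<dots> \<le> real (N - 1) * prob_space.variance (P N) t"
    by (rule variance_shift_average_le)
  finally show ?thesis .
qed

end

theorem corollary1:
  fixes H :: "real measure" and N n :: nat
  assumes "real_distribution H"
    and "integrable H (\<lambda>x. x\<^sup>2)"
    and "N > 1" and "n \<ge> 1"
  shows "pitman_var n (conv_pow H N) / real N \<ge> pitman_var n (conv_pow H (N - 1)) / real (N - 1)"
proof -
  have "real N * pitman_var n (conv_pow H (N - 1)) / real (N - 1) \<le> pitman_var n (conv_pow H N)"
  proof (rule le_pitman_var[OF real_distribution_conv_pow[OF assms(1)] integrable_power2_conv_pow[OF assms(1,2)]])
    show "0 < n" using assms(4) by simp
  next
    fix t assume t: "t \<in> borel_measurable (sample n (conv_pow H N))" "equivariant n t"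
      "integrable (sample n (conv_pow H N)) (\<lambda>x. (t x)\<^sup>2)"
    have "t \<in> borel_measurable (vec_borel n)"
      using t(1) real_distribution.events_eq_borel[OF real_distribution_conv_pow[OF assms(1)]]
      by (simp add: measurable_cong_sets[OF sets_sample refl])
    then interpret pitman_step H n N t
      using assms t by (intro pitman_step.intro) simp_all
    show "real N * pitman_var n (conv_pow H (N - 1)) / real (N - 1) \<le> prob_space.variance (P N) t"
      using scaled_pitman_var_le_variance N by (simp add: divide_le_eq mult.commute)
  qed
  then show ?thesis using assms(3) by (simp add: divide_le_eq le_divide_eq mult.commute)
qed

end
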